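(* Let $k>1$ and $l>0$ be integers and let $t,t'$ be non-negative integers. Then there exists a positive integer $x$ such that the $k$-adic expansion $xl=\sum_{q=1}^{r}s_{xl,q}k^{w_{xl}(q)}$ (with $1\le s_{xl,q}\le k-1$ and $0\le w_{xl}(1)<w_{xl}(2)<\dots$) has at least two terms, $s_{xl,1}=1$ and $w_{xl}(2)-w_{xl}(1)>t$. Moreover, there exists a positive integer $X$ such that the $k$-adic expansion $Xl=\sum_{q}s_{Xl,q}k^{w_{Xl}(q)}$ has at least two terms, $s_{Xl,1}=1$, $w_{Xl}(2)-w_{Xl}(1)>t'$, and $w_{Xl}(1)=w_{xl}(1)$.
   Context: The $k$-adic expansion of a positive integer $m$ is the unique representation $m=\sum_{q=1}^{r}s_{m,q}k^{w_m(q)}$ with digits $1\le s_{m,q}\le k-1$ and exponents $0\le w_m(1)<w_m(2)<\dots<w_m(r)$. *)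

theory Defs
  imports Main
begin

text \<open>The k-adic expansion of a positive integer m: m = sum_{q=1}^r s_{m,q} k^{w_m(q)}
  with digits 1 <= s_{m,q} <= k-1 and strictly increasing exponents.
  The exponents are exactly the positions of the nonzero base-k digits.\<close>

definition kdigit :: "nat \<Rightarrow> nat \<Rightarrow> nat \<Rightarrow> nat" where
  "kdigit k m i = (m div k ^ i) mod k"

definition kadic_exps :: "nat \<Rightarrow> nat \<Rightarrow> nat list" where
  "kadic_exps k m = sorted_list_of_set {i. kdigit k m i \<noteq> 0}"

definition kadic_len :: "nat \<Rightarrow> nat \<Rightarrow> nat" where
  "kadic_len k m = length (kadic_exps k m)"

text \<open>w_m(q), for 1 <= q <= r (1-indexed as in the paper)\<close>
definition kadic_w :: "nat \<Rightarrow> nat \<Rightarrow> nat \<Rightarrow> nat" where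
  "kadic_w k m q = kadic_exps k m ! (q - 1)"

definition kadic_s :: "nat \<Rightarrow> nat \<Rightarrow> nat \<Rightarrow> nat" where
  "kadic_s k m q = kdigit k m (kadic_w k m q)"

end

theory Submission
  imports Defs
begin

text \<open>Since the powers of \<open>k\<close> modulo \<open>l\<close> are eventually periodic, there are \<open>a\<close> and an
  arbitrarily large \<open>n\<close> with \<open>k^(a + n) \<equiv> k^a (mod l)\<close>. Then the number
  \<open>k^a (1 + k^n + k^(2n) + \<dots> + k^((N-1)n))\<close> is congruent to \<open>N k^a\<close> modulo \<open>l\<close>, hence a
  multiple of \<open>l\<close> for \<open>N = 2l\<close>. Its \<open>k\<close>-adic expansion consists of the digits \<open>1\<close> at the
  positions \<open>a, a + n, a + 2n, \<dots>\<close>, so its first two exponents are \<open>n\<close> apart. The same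
  multiple serves for both gap bounds \<open>t\<close> and \<open>t'\<close>.\<close>

lemma kdigit_add_mult:
  fixes k c z :: nat
  assumes "c < k"
  shows "kdigit k (c + k * z) i = (if i = 0 then c else kdigit k z (i - 1))"
proof (cases i)
  case (Suc j)
  have "(c + k * z) div k = z" using assms by simp
  then show ?thesis
    using Suc by (simp add: kdigit_def div_mult2_eq flip: mult.assoc)
qed (use assms in \<open>simp add: kdigit_def\<close>)

lemma kdigit_pow_mult:
  fixes k a z :: nat
  assumes "k > 0"
  shows "kdigit k (k ^ a * z) i = (if a \<le> i then kdigit k z (i - a) else 0)"
proof (cases "a \<le> i")
  case True
  then have "k ^ i = k ^ a * k ^ (i - a)" by (simp flip: power_add)
  with True assms show ?thesis by (simp add: kdigit_def div_mult2_eq)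
next
  case False
  then have "k ^ a * z = k ^ i * (k * (k ^ (a - i - 1) * z))"
    by (simp add: mult_ac flip: power_add power_Suc)
  then have "k ^ a * z div k ^ i = k * (k ^ (a - i - 1) * z)"
    using assms by (metis nonzero_mult_div_cancel_left power_not_zero neq0_conv)
  with False show ?thesis by (simp add: kdigit_def)
qed

fun gapped_repunit :: "nat \<Rightarrow> nat \<Rightarrow> nat \<Rightarrow> nat" where
  "gapped_repunit k n 0 = 0"
| "gapped_repunit k n (Suc N) = 1 + k ^ n * gapped_repunit k n N"

lemma kdigit_gapped_repunit:
  fixes k n N :: nat
  assumes "k > 1" and "n > 0"
  shows "kdigit k (gapped_repunit k n N) i = (if \<exists>j<N. i = j * n then 1 else 0)"
proof (induction N arbitrary: i)
  case 0
  then show ?case by (simp add: kdigit_def)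
next
  case (Suc N)
  have "gapped_repunit k n (Suc N) = 1 + k * (k ^ (n - 1) * gapped_repunit k n N)"
    using \<open>n > 0\<close> by (simp add: mult.assoc flip: power_Suc)
  then have "kdigit k (gapped_repunit k n (Suc N)) i =
      (if i = 0 then 1 else kdigit k (k ^ (n - 1) * gapped_repunit k n N) (i - 1))"
    using assms by (simp only: kdigit_add_mult)
  then have digit: "kdigit k (gapped_repunit k n (Suc N)) i =
      (if i = 0 then 1 else if n \<le> i then kdigit k (gapped_repunit k n N) (i - n) else 0)"
    using assms by (auto simp: kdigit_pow_mult)
  have "(\<exists>j<Suc N. i = j * n) \<longleftrightarrow> i = 0 \<or> n \<le> i \<and> (\<exists>j<N. i - n = j * n)"
  proof
    assume "\<exists>j<Suc N. i = j * n"
    then obtain j where "j < Suc N" "i = j * n" by blast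
    then show "i = 0 \<or> n \<le> i \<and> (\<exists>j<N. i - n = j * n)"
      by (cases j) (auto simp: diff_mult_distrib)
  next
    assume "i = 0 \<or> n \<le> i \<and> (\<exists>j<N. i - n = j * n)"
    then show "\<exists>j<Suc N. i = j * n"
    proof
      assume "n \<le> i \<and> (\<exists>j<N. i - n = j * n)"
      then obtain j where "j < N" "i = Suc j * n" by auto
      then show ?thesis by blast
    qed auto
  qed
  then show ?case
    using digit Suc.IH assms by auto
qed

lemma kadic_exps_eqI:
  assumes "sorted xs" and "distinct xs" and "{i. kdigit k m i \<noteq> 0} = set xs"
  shows "kadic_exps k m = xs"
  using assms by (simp add: kadic_exps_def sorted_list_of_set.idem_if_sorted_distinct)

lemma kadic_exps_shifted_gapped_repunit:
  fixes k n N a :: nat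
  assumes "k > 1" and "n > 0"
  shows "kadic_exps k (k ^ a * gapped_repunit k n N) = map (\<lambda>j. a + j * n) [0..<N]"
proof (rule kadic_exps_eqI)
  show "sorted (map (\<lambda>j. a + j * n) [0..<N])"
    by (simp add: sorted_iff_nth_mono)
  show "distinct (map (\<lambda>j. a + j * n) [0..<N])"
    using \<open>n > 0\<close> by (simp add: distinct_map inj_on_def)
  show "{i. kdigit k (k ^ a * gapped_repunit k n N) i \<noteq> 0} = set (map (\<lambda>j. a + j * n) [0..<N])"
    using assms by (auto simp: kdigit_pow_mult kdigit_gapped_repunit le_iff_add)
qed

lemma pow_mod_periodic:
  fixes k l :: nat
  assumes "l > 0"
  obtains a d where "d > 0" and "\<And>j. k ^ (a + j * d) mod l = k ^ a mod l"
proof -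
  have "\<not> inj (\<lambda>i. k ^ i mod l)"
  proof
    assume "inj (\<lambda>i. k ^ i mod l)"
    moreover have "finite (range (\<lambda>i. k ^ i mod l))"
      using assms by (auto intro: finite_subset[of _ "{..<l}"])
    ultimately show False
      using finite_imageD by fastforce
  qed
  then obtain i j where "i \<noteq> j" "k ^ i mod l = k ^ j mod l"
    unfolding inj_def by blast
  then obtain a b where "a < b" and ab: "k ^ a mod l = k ^ b mod l"
    by (metis nat_neq_iff)
  define d where "d = b - a"
  have step: "k ^ (i + d) mod l = k ^ i mod l" if "a \<le> i" for i
  proof -
    have "i + d = b + (i - a)" and "i = a + (i - a)"
      using \<open>a < b\<close> that by (simp_all add: d_def)
    then have "k ^ (i + d) = k ^ b * k ^ (i - a)" and "k ^ i = k ^ a * k ^ (i - a)"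
      by (metis power_add)+
    then show ?thesis
      using ab by (metis mod_mult_left_eq)
  qed
  have "d > 0"
    using \<open>a < b\<close> by (simp add: d_def)
  moreover have "k ^ (a + j * d) mod l = k ^ a mod l" for j
  proof (induction j)
    case (Suc j)
    have "a + Suc j * d = (a + j * d) + d" by simp
    then show ?case
      using step[of "a + j * d"] Suc.IH by (metis le_add1)
  qed simp
  ultimately show ?thesis
    by (rule that)
qed

lemma shifted_gapped_repunit_mod:
  fixes k l n N a :: nat
  assumes "k ^ (a + n) mod l = k ^ a mod l"
  shows "k ^ a * gapped_repunit k n N mod l = N * k ^ a mod l"
proof (induction N)
  case (Suc N)
  have "k ^ a * gapped_repunit k n (Suc N) = k ^ a + k ^ (a + n) * gapped_repunit k n N"
    by (simp add: algebra_simps power_add)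
  also have "\<dots> mod l = (k ^ a + k ^ a * gapped_repunit k n N) mod l"
    using assms by (metis mod_add_right_eq mod_mult_left_eq)
  also have "\<dots> = Suc N * k ^ a mod l"
    using Suc.IH by (metis mod_add_right_eq mult_Suc)
  finally show ?case .
qed simp

lemma multiple_with_kadic_gap:
  fixes k l T :: nat
  assumes "k > 1" and "l > 0"
  obtains x where "x > 0" and "kadic_len k (x * l) \<ge> 2" and "kadic_s k (x * l) 1 = 1"
    and "kadic_w k (x * l) 2 - kadic_w k (x * l) 1 > T"
proof -
  obtain a d where "d > 0" and periodic: "\<And>j. k ^ (a + j * d) mod l = k ^ a mod l"
    using pow_mod_periodic[OF \<open>l > 0\<close>] by blast
  define n where "n = Suc T * d"
  have "Suc T * 1 \<le> Suc T * d"
    using \<open>d > 0\<close> by (intro mult_le_mono2) simp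
  then have "n > T"
    by (simp add: n_def)
  define m where "m = k ^ a * gapped_repunit k n (2 * l)"
  have exps: "kadic_exps k m = map (\<lambda>j. a + j * n) [0..<2 * l]"
    unfolding m_def using assms \<open>n > T\<close> by (intro kadic_exps_shifted_gapped_repunit) auto
  have "k ^ (a + n) mod l = k ^ a mod l"
    using periodic[of "Suc T"] by (simp add: n_def)
  then have "m mod l = 2 * l * k ^ a mod l"
    unfolding m_def by (rule shifted_gapped_repunit_mod)
  then obtain x where m: "m = x * l"
    by (metis mod_mult_self1_is_0 mult.assoc mod_eq_0_iff_dvd dvd_def mult.commute)
  have "2 \<le> 2 * l"
    using \<open>l > 0\<close> by simp
  then have len: "kadic_len k m \<ge> 2" and w: "kadic_w k m 1 = a" "kadic_w k m 2 = a + n"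
    by (simp_all add: kadic_len_def kadic_w_def exps)
  have "kdigit k m a = 1"
    using assms \<open>n > T\<close> by (simp add: m_def kdigit_pow_mult kdigit_gapped_repunit)
  then have "kadic_s k m 1 = 1"
    unfolding kadic_s_def w(1) .
  have "m \<noteq> 0"
  proof
    assume "m = 0"
    with \<open>kdigit k m a = 1\<close> show False
      by (simp add: kdigit_def)
  qed
  then have "x > 0"
    using m by simp
  with that m len w \<open>kadic_s k m 1 = 1\<close> \<open>n > T\<close> show ?thesis
    by simp
qed

theorem lemma3p1:
  fixes k l t t' :: nat
  assumes "k > 1" and "l > 0"
  shows "\<exists>x::nat. x > 0 \<and> kadic_len k (x * l) \<ge> 2 \<and> kadic_s k (x * l) 1 = 1
           \<and> kadic_w k (x * l) 2 - kadic_w k (x * l) 1 > t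
           \<and> (\<exists>X::nat. X > 0 \<and> kadic_len k (X * l) \<ge> 2 \<and> kadic_s k (X * l) 1 = 1
                \<and> kadic_w k (X * l) 2 - kadic_w k (X * l) 1 > t'
                \<and> kadic_w k (X * l) 1 = kadic_w k (x * l) 1)"
proof -
  obtain x where "x > 0" and "kadic_len k (x * l) \<ge> 2" and "kadic_s k (x * l) 1 = 1"
    and "kadic_w k (x * l) 2 - kadic_w k (x * l) 1 > max t t'"
    using multiple_with_kadic_gap[OF assms, of "max t t'"] by blast
  then show ?thesis
    by (intro exI[of _ x] conjI) auto
qed

end
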